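(* Let $D$ be a directed acyclic graph, let $M_1,M_2$ be disjoint sets of vertices of $D$, and let $Z$ be a set of vertices of $D$. If (a) $M_1\cup M_2\cup \bigl(V(D)-(\mathrm{Out}(M_1)\cup \mathrm{In}(M_1)\cup \mathrm{In}(M_2))\bigr)$ is an independent set, (b) $\mathrm{Out}(M_1)\subseteq Z$, (c) $Z\cap \mathrm{In}(M_1)=M_1$, and (d) $Z\cap \mathrm{In}(M_2)=\emptyset$, then $Z$ is a closed set.
   Context: For a set $X$ of vertices of a digraph $D$: $\mathrm{Out}(X)$ is the set of vertices $y$ such that there is a directed path (possibly of length $0$) from a vertex of $X$ to $y$, and $\mathrm{In}(X)$ is the set of vertices $y$ such that there is a directed path (possibly of length $0$) from $y$ to a vertex of $X$. A set $X$ is independent if the induced subgraph $D[X]$ has no arcs, and closed if $D$ has no arc from a vertex of $X$ to a vertex outside $X$. *)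

theory Defs
  imports Main
begin

definition dag :: "'a set \<Rightarrow> ('a \<times> 'a) set \<Rightarrow> bool" where
  "dag V E \<longleftrightarrow> finite V \<and> E \<subseteq> V \<times> V \<and> acyclic E"

definition Out :: "('a \<times> 'a) set \<Rightarrow> 'a set \<Rightarrow> 'a set" where
  "Out E X = {y. \<exists>x\<in>X. (x, y) \<in> E\<^sup>*}"

definition In :: "('a \<times> 'a) set \<Rightarrow> 'a set \<Rightarrow> 'a set" where
  "In E X = {y. \<exists>x\<in>X. (y, x) \<in> E\<^sup>*}"

definition independent :: "('a \<times> 'a) set \<Rightarrow> 'a set \<Rightarrow> bool" where
  "independent E X \<longleftrightarrow> (\<forall>x\<in>X. \<forall>y\<in>X. (x, y) \<notin> E)"

definition closed_set :: "('a \<times> 'a) set \<Rightarrow> 'a set \<Rightarrow> bool" where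
  "closed_set E X \<longleftrightarrow> (\<forall>x y. (x, y) \<in> E \<longrightarrow> x \<in> X \<longrightarrow> y \<in> X)"

end

theory Submission
  imports Defs
begin

text \<open>Suppose an arc xy leaves Z. As Out(M1) \<subseteq> Z is closed under arcs, x lies outside Out(M1),
  hence by (c) outside In(M1), and by (d) outside In(M2). The complements of In(M1) and In(M2)
  are closed, so y lies outside all three sets as well, and the arc xy contradicts (a).\<close>

lemma closed_setD: "closed_set E X \<Longrightarrow> (x, y) \<in> E \<Longrightarrow> x \<in> X \<Longrightarrow> y \<in> X"
  unfolding closed_set_def by blast

lemma closed_set_Out: "closed_set E (Out E X)"
  unfolding closed_set_def Out_def by (auto intro: rtrancl_into_rtrancl)

lemma closed_set_Compl_In: "closed_set E (- In E X)"
  unfolding closed_set_def In_def by (auto intro: converse_rtrancl_into_rtrancl)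

lemma subset_Out: "X \<subseteq> Out E X"
  unfolding Out_def by blast

theorem lemma5p3:
  fixes V :: "'a set" and E :: "('a \<times> 'a) set" and M1 M2 Z :: "'a set"
  assumes "dag V E"
    and "M1 \<subseteq> V" and "M2 \<subseteq> V" and "Z \<subseteq> V"
    and "M1 \<inter> M2 = {}"
    and "independent E (M1 \<union> M2 \<union> (V - (Out E M1 \<union> In E M1 \<union> In E M2)))"
    and "Out E M1 \<subseteq> Z"
    and "Z \<inter> In E M1 = M1"
    and "Z \<inter> In E M2 = {}"
  shows "closed_set E Z"
  unfolding closed_set_def
proof (intro allI impI)
  fix x y assume xy: "(x, y) \<in> E" and "x \<in> Z"
  show "y \<in> Z"
  proof (rule ccontr)
    assume "y \<notin> Z"
    then have y_Out: "y \<notin> Out E M1"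
      using assms(7) by blast
    then have x_Out: "x \<notin> Out E M1"
      using xy closed_set_Out closed_setD by metis
    have x_In: "x \<notin> In E M1" "x \<notin> In E M2"
      using \<open>x \<in> Z\<close> x_Out assms(8,9) subset_Out[of M1 E] by blast+
    then have y_In: "y \<notin> In E M1" "y \<notin> In E M2"
      using xy closed_set_Compl_In closed_setD by (metis ComplD ComplI)+
    have "x \<in> V" "y \<in> V"
      using xy assms(1) unfolding dag_def by blast+
    then have "x \<in> V - (Out E M1 \<union> In E M1 \<union> In E M2)" "y \<in> V - (Out E M1 \<union> In E M1 \<union> In E M2)"
      using x_Out y_Out x_In y_In by blast+
    then show False
      using assms(6) xy unfolding independent_def by blast
  qed
qed

end
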